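(* Let $a<b$, $\alpha\in(0,1)$, fix $n\in\mathbb{N}$ and let $x\in C^n[a,b]$. Then, for $t\in(a,b]$, \begin{multline*} {_aD_t^\alpha} x(t)=\frac{1}{\Gamma(1-\alpha)}(t-a)^{-\alpha}x(t)+\sum_{i=1}^{n-1}A(\alpha,i)(t-a)^{i-\alpha}x^{(i)}(t)\\ +\sum_{p=n}^{\infty}\left[\frac{-\Gamma(p-n+1+\alpha)}{\Gamma(-\alpha)\Gamma(1+\alpha)(p-n+1)!}(t-a)^{-\alpha}x(t)+ B(\alpha,p)(t-a)^{n-1-p-\alpha}V_p(t)\right], \end{multline*} where \[ A(\alpha,i)=\frac{1}{\Gamma(i+1-\alpha)}\left[1+\sum_{p=n-i}^{\infty}\frac{\Gamma(p-n+1+\alpha)}{\Gamma(\alpha-i)(p-n+i+1)!}\right],\quad i=1,\ldots,n-1, \] \[ B(\alpha,p)=\frac{\Gamma(p-n+1+\alpha)}{\Gamma(-\alpha)\Gamma(1+\alpha)(p-n+1)!},\qquad V_p(t)=(p-n+1)\int_a^t (\tau-a)^{p-n}x(\tau)\,d\tau . \]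
   Context: For $\alpha\in(0,1)$ and a function $x$ on $[a,b]$, the left Riemann--Liouville fractional derivative is ${_aD_t^\alpha} x(t)=\frac{1}{\Gamma(1-\alpha)}\frac{d}{dt}\int_a^t (t-\tau)^{-\alpha}x(\tau)\,d\tau$. $\Gamma$ denotes Euler's gamma function. *)

theory Defs
  imports "HOL-Analysis.Analysis"
begin

definition Cn_on :: "nat \<Rightarrow> real \<Rightarrow> real \<Rightarrow> (real \<Rightarrow> real) \<Rightarrow> (nat \<Rightarrow> real \<Rightarrow> real) \<Rightarrow> bool" where
  "Cn_on n a b x D \<longleftrightarrow>
     (\<forall>t\<in>{a..b}. D 0 t = x t) \<and>
     (\<forall>i<n. \<forall>t\<in>{a..b}. (D i has_real_derivative D (Suc i) t) (at t within {a..b})) \<and>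
     continuous_on {a..b} (D n)"

definition RL_deriv_at :: "real \<Rightarrow> real \<Rightarrow> real \<Rightarrow> (real \<Rightarrow> real) \<Rightarrow> real \<Rightarrow> real \<Rightarrow> bool" where
  "RL_deriv_at a b \<alpha> x t L \<longleftrightarrow>
     ((\<lambda>s. (1 / Gamma (1 - \<alpha>)) * integral {a..s} (\<lambda>\<tau>. (s - \<tau>) powr (-\<alpha>) * x \<tau>))
        has_real_derivative L) (at t within {a..b})"

text \<open>A(alpha,i), with the sum over p = n-i, n-i+1, ... reindexed by k = p-(n-i),
  so that p-n+1 = k+1-i and p-n+i+1 = k+1.\<close>
definition A_coef :: "nat \<Rightarrow> real \<Rightarrow> nat \<Rightarrow> real" where
  "A_coef n \<alpha> i = (1 / Gamma (real i + 1 - \<alpha>)) *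
     (1 + (\<Sum>k. Gamma (real k + 1 - real i + \<alpha>) / (Gamma (\<alpha> - real i) * fact (k + 1))))"

text \<open>B(alpha,p) for p = n + k, so p-n+1 = k+1.\<close>
definition B_coef :: "real \<Rightarrow> nat \<Rightarrow> real" where
  "B_coef \<alpha> k = Gamma (real k + 1 + \<alpha>) / (Gamma (-\<alpha>) * Gamma (1 + \<alpha>) * fact (k + 1))"

text \<open>V_p(t) for p = n + k: (p-n+1) int_a^t (tau-a)^(p-n) x(tau) dtau.\<close>
definition V_fun :: "real \<Rightarrow> (real \<Rightarrow> real) \<Rightarrow> nat \<Rightarrow> real \<Rightarrow> real" where
  "V_fun a x k t = real (k + 1) * integral {a..t} (\<lambda>\<tau>. (\<tau> - a) ^ k * x \<tau>)"

end

theory Submission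
  imports Defs
begin

text \<open>The series inside A(\<alpha>, i) is \<Sum>_{m \<ge> 1} (\<alpha> - i)_m / m!; its partial
  sums telescope to (\<alpha> - i + 1)_N / N! - 1 \<rightarrow> -1, so every A(\<alpha>, i) vanishes. Integrating V_p by parts
  turns the p-th term of the other series into (t - a)^(-\<alpha>) / \<Gamma>(1 - \<alpha>) \<cdot> \<integral>_a^t c_m r^m x', where
  r = (\<tau> - a) / (t - a) and c_m = (\<alpha>)_m / m! are the coefficients of (1 - r)^(-\<alpha>); by dominated
  convergence that series sums to (t - a)^(-\<alpha>) / \<Gamma>(1 - \<alpha>) \<cdot> \<integral>_a^t ((1 - r)^(-\<alpha>) - 1) x'.
  On the other hand, the substitution \<tau> = s - (s - a) v^(1/(1 - \<alpha>)) removes the singularity of the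
  kernel, so one may differentiate under the integral sign:
  d/dt \<integral>_a^t (t - \<tau>)^(-\<alpha>) x = (t - a)^(-\<alpha>) x(a) + \<integral>_a^t (t - \<tau>)^(-\<alpha>) x'.
  Both sides of the claimed identity therefore equal (t - a)^(-\<alpha>) x(a) + \<integral>_a^t (t - \<tau>)^(-\<alpha>) x',
  divided by \<Gamma>(1 - \<alpha>).\<close>

section \<open>Pochhammer series\<close>

lemma pochhammer_Suc_over_fact_tendsto_0:
  fixes z :: real
  assumes "z < 0"
  shows "(\<lambda>n. pochhammer z (Suc n) / fact n) \<longlonglongrightarrow> 0"
proof -
  have "(\<lambda>n. rGamma_series z n * real n powr z) \<longlonglongrightarrow> rGamma z * 0"
    by (intro tendsto_intros tendsto_neg_powr assms filterlim_real_sequentially)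
  moreover have "eventually (\<lambda>n. rGamma_series z n * real n powr z = pochhammer z (Suc n) / fact n) sequentially"
    using eventually_gt_at_top[of "0::nat"] by eventually_elim (simp add: rGamma_series_def powr_def)
  ultimately show ?thesis
    by (simp add: Lim_transform_eventually)
qed

lemma pochhammer_over_fact_sums:
  fixes \<beta> :: real
  assumes "\<beta> < 0"
  shows "(\<lambda>k. pochhammer \<beta> (Suc k) / fact (Suc k)) sums (-1)"
proof -
  have partial_sums: "(\<Sum>k<N. pochhammer \<beta> (Suc k) / fact (Suc k)) = pochhammer \<beta> (Suc N) / (\<beta> * fact N) - 1" for N
  proof (induction N)
    case 0
    then show ?case using assms by simp
  next
    case (Suc N)
    have "pochhammer \<beta> (Suc (Suc N)) / (\<beta> * fact (Suc N))
        = pochhammer \<beta> (Suc N) / (\<beta> * fact N) + pochhammer \<beta> (Suc N) / fact (Suc N)"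
      using assms by (simp add: pochhammer_Suc[of \<beta> "Suc N"] field_simps del: fact_Suc) (simp add: algebra_simps)
    with Suc.IH show ?case by simp
  qed
  have "(\<lambda>N. pochhammer \<beta> (Suc N) / fact N / \<beta> - 1) \<longlonglongrightarrow> 0 / \<beta> - 1"
    using assms by (intro tendsto_intros pochhammer_Suc_over_fact_tendsto_0) auto
  then show ?thesis
    unfolding sums_def partial_sums by (simp add: mult.commute)
qed

lemma pochhammer_binomial_sums:
  fixes \<alpha> r :: real
  assumes "\<bar>r\<bar> < 1"
  shows "(\<lambda>m. pochhammer \<alpha> m / fact m * r ^ m) sums (1 - r) powr (-\<alpha>)"
proof -
  have "((-\<alpha>) gchoose m) * (-r) ^ m = pochhammer \<alpha> m / fact m * r ^ m" for m
    by (simp add: gbinomial_pochhammer power_minus[of r] flip: mult.assoc power_add)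
  then show ?thesis
    using gen_binomial_real[of "-r" "-\<alpha>"] assms by simp
qed

lemma Gamma_ratio_eq_pochhammer:
  fixes z :: real
  assumes "z \<notin> \<int>"
  shows "Gamma (z + real m) / (Gamma z * fact m) = pochhammer z m / fact m"
proof -
  have "z \<notin> \<int>\<^sub>\<le>\<^sub>0" using assms nonpos_Ints_subset_Ints by blast
  then show ?thesis by (simp add: pochhammer_Gamma)
qed

lemma A_coef_series_sums:
  fixes \<alpha> :: real
  assumes "\<alpha> \<notin> \<int>" "\<alpha> < real i"
  shows "(\<lambda>k. Gamma (real k + 1 - real i + \<alpha>) / (Gamma (\<alpha> - real i) * fact (k + 1))) sums (-1)"
proof -
  have nonint: "\<alpha> - real i \<notin> \<int>"
    using assms(1) Ints_add[of "\<alpha> - real i" "real i"] by auto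
  have "Gamma (real k + 1 - real i + \<alpha>) / (Gamma (\<alpha> - real i) * fact (k + 1))
      = pochhammer (\<alpha> - real i) (Suc k) / fact (Suc k)" for k
    using Gamma_ratio_eq_pochhammer[OF nonint, of "Suc k"] by (simp add: algebra_simps)
  then show ?thesis
    using pochhammer_over_fact_sums[of "\<alpha> - real i"] assms(2) by simp
qed

lemma A_coef_eq_0:
  assumes "\<alpha> \<notin> \<int>" "\<alpha> < real i"
  shows "A_coef n \<alpha> i = 0"
  unfolding A_coef_def using sums_unique[OF A_coef_series_sums[OF assms]] by simp

lemma B_coef_eq_pochhammer:
  assumes "\<alpha> \<notin> \<int>"
  shows "B_coef \<alpha> k = - pochhammer \<alpha> (Suc k) / (fact (Suc k) * Gamma (1 - \<alpha>))"
proof -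
  have "\<alpha> \<notin> \<int>\<^sub>\<le>\<^sub>0" "- \<alpha> \<notin> \<int>\<^sub>\<le>\<^sub>0" "1 - \<alpha> \<notin> \<int>\<^sub>\<le>\<^sub>0"
    using assms nonpos_Ints_subset_Ints Ints_minus[of "-\<alpha>"] Ints_diff[of 1 "1 - \<alpha>"] by auto
  then have "Gamma (1 + \<alpha>) = \<alpha> * Gamma \<alpha>" "Gamma (1 - \<alpha>) = - \<alpha> * Gamma (- \<alpha>)"
    and "Gamma \<alpha> \<noteq> 0" "Gamma (1 - \<alpha>) \<noteq> 0"
    using Gamma_plus1[of \<alpha>] Gamma_plus1[of "-\<alpha>"] by (auto simp: add.commute Gamma_eq_zero_iff)
  moreover have "Gamma (real k + 1 + \<alpha>) = pochhammer \<alpha> (Suc k) * Gamma \<alpha>"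
    using pochhammer_Gamma[of \<alpha> "Suc k"] \<open>\<alpha> \<notin> \<int>\<^sub>\<le>\<^sub>0\<close> \<open>Gamma \<alpha> \<noteq> 0\<close>
    by (simp add: add_ac)
  moreover have "\<alpha> \<noteq> 0" using assms by auto
  ultimately show ?thesis
    unfolding B_coef_def by (simp add: field_simps del: fact_Suc)
qed

section \<open>The power-kernel substitution\<close>

lemma power_substitution_in_interval:
  fixes a b s v q :: real
  assumes "a \<le> s" "s \<le> b" "v \<in> {0..1}" "0 < q"
  shows "s - (s - a) * v powr q \<in> {a..b}"
proof -
  have "0 \<le> v powr q" "v powr q \<le> 1" using assms(3,4) by (auto intro!: powr_le1)
  then have "0 \<le> (s - a) * v powr q" "(s - a) * v powr q \<le> s - a"
    using assms(1) by (auto intro: mult_left_le)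
  then show ?thesis using assms(2) by auto
qed

lemma continuous_on_power_substitution:
  fixes f :: "real \<Rightarrow> real" and a b s q :: real
  assumes "continuous_on {a..b} f" "s \<in> {a..b}" "0 < q"
  shows "continuous_on {0..1} (\<lambda>v. f (s - (s - a) * v powr q))"
proof (rule continuous_on_compose2[OF assms(1)])
  show "continuous_on {0..1} (\<lambda>v. s - (s - a) * v powr q)"
    using assms(3) by (intro continuous_intros continuous_on_powr') auto
  show "(\<lambda>v. s - (s - a) * v powr q) ` {0..1} \<subseteq> {a..b}"
    using power_substitution_in_interval assms(2,3) by auto
qed

lemma has_integral_power_kernel_subst:
  fixes f :: "real \<Rightarrow> real" and \<alpha> a s :: real
  assumes "0 < \<alpha>" "\<alpha> < 1" "a < s" and f: "continuous_on {a..s} f"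
  shows "((\<lambda>\<tau>. (s - \<tau>) powr (-\<alpha>) * f \<tau>) has_integral
           (s - a) powr (1 - \<alpha>) / (1 - \<alpha>) * integral {0..1} (\<lambda>v. f (s - (s - a) * v powr (1 / (1 - \<alpha>))))) {a..s}"
proof -
  define q where "q = 1 / (1 - \<alpha>)"
  define c where "c = (1 - \<alpha>) / (s - a) powr (1 - \<alpha>)"
  define g where "g \<tau> = (s - \<tau>) powr (1 - \<alpha>) / (s - a) powr (1 - \<alpha>)" for \<tau>
  define F where "F v = f (s - (s - a) * v powr q)" for v
  have c_pos: "0 < c" using assms by (simp add: c_def)
  have g_range: "g ` {a..s} \<subseteq> {0..1}"
    using assms by (auto simp: g_def intro!: powr_mono2)
  have g_cont: "continuous_on {a..s} g"
    unfolding g_def using assms by (intro continuous_intros continuous_on_powr') auto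
  have g_deriv: "(g has_real_derivative - c * (s - \<tau>) powr (-\<alpha>)) (at \<tau> within {a..s})"
    if "\<tau> \<in> {a..s} - {s}" for \<tau>
    unfolding g_def c_def using that
    by (auto intro!: derivative_eq_intros simp: field_simps)
  have F_cont: "continuous_on {0..1} F"
    unfolding F_def q_def using assms by (intro continuous_on_power_substitution[OF f]) auto
  have F_g: "F (g \<tau>) = f \<tau>" if "\<tau> \<in> {a..s}" for \<tau>
  proof -
    have "g \<tau> powr q = (s - \<tau>) / (s - a)"
      using that assms by (simp add: g_def q_def powr_divide powr_powr)
    then show ?thesis using assms by (simp add: F_def)
  qed
  have "((\<lambda>\<tau>. (- c * (s - \<tau>) powr (-\<alpha>)) *\<^sub>R F (g \<tau>)) has_integral
      (integral {g a..g s} F - integral {g s..g a} F)) {a..s}"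
    by (rule has_integral_substitution_general[OF _ _ g_range F_cont g_cont g_deriv, of "{s}"])
      (use assms in auto)
  moreover have "g a = 1" "g s = 0" using assms by (auto simp: g_def)
  ultimately have "((\<lambda>\<tau>. - c * ((s - \<tau>) powr (-\<alpha>) * f \<tau>)) has_integral - integral {0..1} F) {a..s}"
    by (subst has_integral_cong[of "{a..s}" _ "\<lambda>\<tau>. (- c * (s - \<tau>) powr (-\<alpha>)) *\<^sub>R F (g \<tau>)"])
      (auto simp: F_g)
  from has_integral_mult_right[OF this, of "- 1 / c"]
  have "((\<lambda>\<tau>. (s - \<tau>) powr (-\<alpha>) * f \<tau>) has_integral integral {0..1} F / c) {a..s}"
    using c_pos by simp
  then show ?thesis
    by (simp add: c_def F_def[abs_def] q_def mult.commute)
qed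

lemma power_substitution_integral_has_derivative:
  fixes x x' :: "real \<Rightarrow> real" and a b q t :: real
  assumes "0 < q"
    and x: "\<And>\<tau>. \<tau> \<in> {a..b} \<Longrightarrow> (x has_real_derivative x' \<tau>) (at \<tau> within {a..b})"
    and x': "continuous_on {a..b} x'" and t: "t \<in> {a..b}"
  shows "((\<lambda>s. integral {0..1} (\<lambda>v. x (s - (s - a) * v powr q))) has_real_derivative
          integral {0..1} (\<lambda>v. x' (t - (t - a) * v powr q))
          - integral {0..1} (\<lambda>v. x' (t - (t - a) * v powr q) * v powr q)) (at t within {a..b})"
proof -
  have subst_range: "s - (s - a) * v powr q \<in> {a..b}" if "s \<in> {a..b}" "v \<in> {0..1}" for s v
    using power_substitution_in_interval that \<open>0 < q\<close> by auto
  have x_subst_deriv: "((\<lambda>s. x (s - (s - a) * v powr q)) has_real_derivative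
      x' (s - (s - a) * v powr q) * (1 - v powr q)) (at s within {a..b})"
    if "s \<in> {a..b}" "v \<in> cbox 0 1" for s v
  proof -
    let ?\<phi> = "\<lambda>s. s - (s - a) * v powr q"
    have "?\<phi> ` {a..b} \<subseteq> {a..b}" using subst_range that by auto
    then have "(x has_real_derivative x' (?\<phi> s)) (at (?\<phi> s) within ?\<phi> ` {a..b})"
      using DERIV_subset[OF x] subst_range that by blast
    moreover have "(?\<phi> has_real_derivative 1 - v powr q) (at s within {a..b})"
      by (auto intro!: derivative_eq_intros)
    ultimately show ?thesis
      using DERIV_image_chain[of x _ ?\<phi>] by (simp add: o_def)
  qed
  have "continuous_on ({a..b} \<times> {0..1}) (\<lambda>p. x' (fst p - (fst p - a) * snd p powr q))"
    using \<open>0 < q\<close> subst_range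
    by (intro continuous_on_compose2[OF x'] continuous_intros continuous_on_powr') auto
  then have cont: "continuous_on ({a..b} \<times> cbox 0 1)
      (\<lambda>(s, v). x' (s - (s - a) * v powr q) * (1 - v powr q))"
    using \<open>0 < q\<close> by (auto simp: case_prod_unfold intro!: continuous_intros continuous_on_powr')
  have "continuous_on {0..1} (\<lambda>v. x' (t - (t - a) * v powr q))"
    by (rule continuous_on_power_substitution[OF x' t \<open>0 < q\<close>])
  moreover have "continuous_on {0..1} (\<lambda>v. v powr q)"
    using \<open>0 < q\<close> by (intro continuous_intros continuous_on_powr') auto
  ultimately have "integral {0..1} (\<lambda>v. x' (t - (t - a) * v powr q) * (1 - v powr q))
      = integral {0..1} (\<lambda>v. x' (t - (t - a) * v powr q))
        - integral {0..1} (\<lambda>v. x' (t - (t - a) * v powr q) * v powr q)"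
    by (simp add: right_diff_distrib integral_diff integrable_continuous_interval continuous_on_mult)
  moreover have "(\<lambda>v. x (s - (s - a) * v powr q)) integrable_on cbox 0 1" if "s \<in> {a..b}" for s
    using continuous_on_power_substitution[OF DERIV_continuous_on[OF x] that \<open>0 < q\<close>]
    by (simp add: integrable_continuous_interval)
  ultimately show ?thesis
    using leibniz_rule_field_derivative[OF x_subst_deriv _ cont t] by simp
qed

lemma power_substitution_integral_by_parts:
  fixes x x' :: "real \<Rightarrow> real" and a b q t :: real
  assumes "0 < q" "a < t" "t \<le> b"
    and x: "\<And>\<tau>. \<tau> \<in> {a..b} \<Longrightarrow> (x has_real_derivative x' \<tau>) (at \<tau> within {a..b})"
    and x': "continuous_on {a..b} x'"
  shows "integral {0..1} (\<lambda>v. x (t - (t - a) * v powr q))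
         = x a + q * (t - a) * integral {0..1} (\<lambda>v. x' (t - (t - a) * v powr q) * v powr q)"
proof -
  define h where "h = t - a"
  define \<phi> where "\<phi> v = t - h * v powr q" for v
  have t: "t \<in> {a..b}" using assms by simp
  have x_cont: "continuous_on {0..1} (\<lambda>v. x (\<phi> v))"
    and x'_cont: "continuous_on {0..1} (\<lambda>v. x' (\<phi> v))"
    using continuous_on_power_substitution[OF DERIV_continuous_on[OF x] t \<open>0 < q\<close>]
      continuous_on_power_substitution[OF x' t \<open>0 < q\<close>]
    by (simp_all add: \<phi>_def h_def)
  have pow_cont: "continuous_on {0..1} (\<lambda>v. v powr q)"
    using \<open>0 < q\<close> by (intro continuous_intros continuous_on_powr') auto
  have deriv: "((\<lambda>v. v * x (\<phi> v)) has_real_derivative x (\<phi> v) - q * h * (x' (\<phi> v) * v powr q)) (at v)"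
    if "v \<in> {0<..<1}" for v
  proof -
    have "0 < v powr q" "v powr q < 1"
      using that \<open>0 < q\<close> powr_less_mono2[of q v 1] by auto
    moreover have "0 < h" using assms by (simp add: h_def)
    ultimately have "0 < h * v powr q" "h * v powr q < h" by simp_all
    then have "\<phi> v \<in> {a<..<b}"
      using assms h_def unfolding \<phi>_def greaterThanLessThan_iff by linarith
    then have "(x has_real_derivative x' (\<phi> v)) (at (\<phi> v))"
      using x[of "\<phi> v"] at_within_interior[of "\<phi> v" "{a..b}"] by auto
    moreover have "(\<phi> has_real_derivative - h * (q * v powr (q - 1))) (at v)"
      unfolding \<phi>_def using that by (auto intro!: derivative_eq_intros)
    ultimately have "((\<lambda>v. x (\<phi> v)) has_real_derivative x' (\<phi> v) * (- h * (q * v powr (q - 1)))) (at v)"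
      by (rule DERIV_chain2)
    from DERIV_mult[OF DERIV_ident this]
    have "((\<lambda>v. v * x (\<phi> v)) has_real_derivative
        1 * x (\<phi> v) + x' (\<phi> v) * (- h * (q * v powr (q - 1))) * v) (at v)" .
    moreover have "v * v powr (q - 1) = v powr q"
      using that by (simp add: powr_diff)
    ultimately show ?thesis
      by (elim DERIV_cong) (simp add: algebra_simps flip: \<open>v * v powr (q - 1) = v powr q\<close>)
  qed
  have "((\<lambda>v. x (\<phi> v) - q * h * (x' (\<phi> v) * v powr q)) has_integral 1 * x (\<phi> 1) - 0 * x (\<phi> 0)) {0..1}"
    using x_cont deriv
    by (intro fundamental_theorem_of_calculus_interior)
      (auto intro!: continuous_intros simp: has_real_derivative_iff_has_vector_derivative)
  then have "integral {0..1} (\<lambda>v. x (\<phi> v) - q * h * (x' (\<phi> v) * v powr q)) = x a"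
    by (simp add: integral_unique \<phi>_def h_def)
  moreover have "(\<lambda>v. x' (\<phi> v) * v powr q) integrable_on {0..1}"
    using continuous_on_mult[OF x'_cont pow_cont] by (simp add: integrable_continuous_interval)
  ultimately show ?thesis
    using integral_diff[OF integrable_continuous_interval[OF x_cont] integrable_on_mult_right]
    by (simp add: \<phi>_def h_def)
qed

theorem abel_integral_has_derivative:
  fixes x x' :: "real \<Rightarrow> real" and a b \<alpha> t :: real
  assumes "0 < \<alpha>" "\<alpha> < 1" "a < t" "t \<le> b"
    and x: "\<And>\<tau>. \<tau> \<in> {a..b} \<Longrightarrow> (x has_real_derivative x' \<tau>) (at \<tau> within {a..b})"
    and x': "continuous_on {a..b} x'"
  shows "((\<lambda>s. integral {a..s} (\<lambda>\<tau>. (s - \<tau>) powr (-\<alpha>) * x \<tau>)) has_real_derivative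
          (t - a) powr (-\<alpha>) * x a + integral {a..t} (\<lambda>\<tau>. (t - \<tau>) powr (-\<alpha>) * x' \<tau>))
         (at t within {a..b})"
proof -
  define q where "q = 1 / (1 - \<alpha>)"
  have "0 < q" using assms by (simp add: q_def)
  define P where "P s = integral {0..1} (\<lambda>v. x (s - (s - a) * v powr q))" for s
  define J0 where "J0 = integral {0..1} (\<lambda>v. x' (t - (t - a) * v powr q))"
  define J1 where "J1 = integral {0..1} (\<lambda>v. x' (t - (t - a) * v powr q) * v powr q)"
  have t: "t \<in> {a..b}" using assms by simp
  have abel_eq: "integral {a..s} (\<lambda>\<tau>. (s - \<tau>) powr (-\<alpha>) * x \<tau>) = (s - a) powr (1 - \<alpha>) / (1 - \<alpha>) * P s"
    if "s \<in> {a..b}" for s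
  proof (cases "s = a")
    case False
    then have "continuous_on {a..s} x"
      using that continuous_on_subset[OF DERIV_continuous_on[OF x]] by auto
    with False that show ?thesis
      using has_integral_power_kernel_subst[OF assms(1,2)] by (simp add: integral_unique P_def q_def)
  qed simp
  have K: "integral {a..t} (\<lambda>\<tau>. (t - \<tau>) powr (-\<alpha>) * x' \<tau>) = (t - a) powr (1 - \<alpha>) / (1 - \<alpha>) * J0"
    using has_integral_power_kernel_subst[OF assms(1-3) continuous_on_subset[OF x']] assms
    by (simp add: integral_unique J0_def q_def)
  have P_t: "P t = x a + q * (t - a) * J1"
    unfolding P_def J1_def by (rule power_substitution_integral_by_parts[OF \<open>0 < q\<close> assms(3,4) x x'])
  have "((\<lambda>s. (s - a) powr (1 - \<alpha>) / (1 - \<alpha>)) has_real_derivative (t - a) powr (-\<alpha>)) (at t within {a..b})"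
    using assms by (auto intro!: derivative_eq_intros)
  from DERIV_mult[OF this power_substitution_integral_has_derivative[OF \<open>0 < q\<close> x x' t]]
  have "((\<lambda>s. (s - a) powr (1 - \<alpha>) / (1 - \<alpha>) * P s) has_real_derivative
      (t - a) powr (-\<alpha>) * P t + (J0 - J1) * ((t - a) powr (1 - \<alpha>) / (1 - \<alpha>))) (at t within {a..b})"
    unfolding P_def J0_def J1_def .
  moreover have "(t - a) powr (-\<alpha>) * P t + (J0 - J1) * ((t - a) powr (1 - \<alpha>) / (1 - \<alpha>))
      = (t - a) powr (-\<alpha>) * x a + integral {a..t} (\<lambda>\<tau>. (t - \<tau>) powr (-\<alpha>) * x' \<tau>)"
  proof -
    have "(t - a) powr (1 - \<alpha>) = (t - a) * (t - a) powr (-\<alpha>)"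
      using assms by (simp add: powr_add[of "t - a" 1 "-\<alpha>", simplified])
    moreover have "H * (X + 1 / c * h * J1) + (J0 - J1) * (h * H / c) = H * X + h * H / c * J0"
      if "c \<noteq> 0" for c H h X :: real
      using that by (simp add: field_simps)
    ultimately show ?thesis
      using assms unfolding P_t K q_def by simp
  qed
  ultimately have "((\<lambda>s. (s - a) powr (1 - \<alpha>) / (1 - \<alpha>) * P s) has_real_derivative
      (t - a) powr (-\<alpha>) * x a + integral {a..t} (\<lambda>\<tau>. (t - \<tau>) powr (-\<alpha>) * x' \<tau>)) (at t within {a..b})"
    by simp
  then show ?thesis
    by (rule has_field_derivative_transform_within[OF _ zero_less_one t]) (simp add: abel_eq)
qed

section \<open>Termwise integration of the binomial series\<close>

lemma sums_integral_nonneg_series_mult: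
  fixes u :: "nat \<Rightarrow> real \<Rightarrow> real" and U X :: "real \<Rightarrow> real" and a b :: real
  assumes u: "\<And>k. continuous_on {a..b} (u k)"
    and u_nonneg: "\<And>k \<tau>. \<tau> \<in> {a<..<b} \<Longrightarrow> 0 \<le> u k \<tau>"
    and u_sums: "\<And>\<tau>. \<tau> \<in> {a<..<b} \<Longrightarrow> (\<lambda>k. u k \<tau>) sums U \<tau>"
    and U: "U integrable_on {a..b}" and X: "continuous_on {a..b} X"
  shows "(\<lambda>k. integral {a..b} (\<lambda>\<tau>. u k \<tau> * X \<tau>)) sums integral {a..b} (\<lambda>\<tau>. U \<tau> * X \<tau>)"
proof -
  obtain M where M: "\<And>\<tau>. \<tau> \<in> {a..b} \<Longrightarrow> \<bar>X \<tau>\<bar> \<le> M"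
    using compact_imp_bounded[OF compact_continuous_image[OF X compact_Icc]]
    unfolding bounded_iff by (metis atLeastAtMost_iff image_eqI real_norm_def)
  define f where "f N \<tau> = (\<Sum>k<N. u k \<tau> * X \<tau>)" for N \<tau>
  have f_cont: "continuous_on {a..b} (f N)" for N
    unfolding f_def using u X by (intro continuous_intros)
  have f_bound: "norm (f N \<tau>) \<le> M * U \<tau>" if "\<tau> \<in> {a<..<b}" for N \<tau>
  proof -
    have "norm (f N \<tau>) = (\<Sum>k<N. u k \<tau>) * \<bar>X \<tau>\<bar>"
      using u_nonneg[OF that] by (simp add: f_def abs_mult sum_distrib_right[symmetric] sum_nonneg)
    also have "\<dots> \<le> U \<tau> * M"
      using M[of \<tau>] that u_nonneg[OF that] sums_unique[OF u_sums[OF that]]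
        sum_le_suminf[OF sums_summable[OF u_sums[OF that]]]
        suminf_nonneg[OF sums_summable[OF u_sums[OF that]]]
      by (intro mult_mono) (auto intro: sum_nonneg)
    finally show ?thesis by (simp add: mult.commute)
  qed
  have "(\<lambda>N. integral {a<..<b} (f N)) \<longlonglongrightarrow> integral {a<..<b} (\<lambda>\<tau>. U \<tau> * X \<tau>)"
  proof (rule dominated_convergence(2))
    show "f N integrable_on {a<..<b}" for N
      using f_cont integrable_continuous_interval integrable_on_Icc_iff_Ioo by blast
    show "(\<lambda>\<tau>. M * U \<tau>) integrable_on {a<..<b}"
      using U integrable_on_Icc_iff_Ioo integrable_on_mult_right by blast
    show "(\<lambda>N. f N \<tau>) \<longlonglongrightarrow> U \<tau> * X \<tau>" if "\<tau> \<in> {a<..<b}" for \<tau>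
      using sums_mult2[OF u_sums[OF that], of "X \<tau>"] by (simp add: sums_def f_def)
  qed (fact f_bound)
  moreover have "integral {a<..<b} (f N) = (\<Sum>k<N. integral {a..b} (\<lambda>\<tau>. u k \<tau> * X \<tau>))" for N
    using u X unfolding f_def integral_open_interval_real[symmetric]
    by (intro integral_sum) (auto intro: integrable_continuous_interval continuous_intros)
  ultimately show ?thesis
    by (simp add: sums_def integral_open_interval_real)
qed

lemma binomial_kernel_series_sums:
  fixes X :: "real \<Rightarrow> real" and \<alpha> a t :: real
  assumes "0 < \<alpha>" "\<alpha> < 1" "a < t" and X: "continuous_on {a..t} X"
  shows "(\<lambda>k. integral {a..t} (\<lambda>\<tau>. pochhammer \<alpha> (Suc k) / fact (Suc k) * ((\<tau> - a) / (t - a)) ^ Suc k * X \<tau>))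
         sums integral {a..t} (\<lambda>\<tau>. (((t - \<tau>) / (t - a)) powr (-\<alpha>) - 1) * X \<tau>)"
proof (rule sums_integral_nonneg_series_mult[OF _ _ _ _ X])
  define h where "h = t - a"
  have "0 < h" using assms by (simp add: h_def)
  show "continuous_on {a..t} (\<lambda>\<tau>. pochhammer \<alpha> (Suc k) / fact (Suc k) * ((\<tau> - a) / (t - a)) ^ Suc k)" for k
    using assms by (intro continuous_intros) auto
  show "0 \<le> pochhammer \<alpha> (Suc k) / fact (Suc k) * ((\<tau> - a) / (t - a)) ^ Suc k"
    if "\<tau> \<in> {a<..<t}" for k \<tau>
    using that assms by (intro mult_nonneg_nonneg divide_nonneg_pos zero_le_power pochhammer_nonneg) auto
  show "(\<lambda>k. pochhammer \<alpha> (Suc k) / fact (Suc k) * ((\<tau> - a) / (t - a)) ^ Suc k)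
      sums (((t - \<tau>) / (t - a)) powr (-\<alpha>) - 1)" if "\<tau> \<in> {a<..<t}" for \<tau>
  proof -
    have "\<bar>(\<tau> - a) / h\<bar> < 1" using that \<open>0 < h\<close> by (auto simp: h_def)
    from pochhammer_binomial_sums[OF this, of \<alpha>]
    have "(\<lambda>k. pochhammer \<alpha> (Suc k) / fact (Suc k) * ((\<tau> - a) / h) ^ Suc k)
        sums ((1 - (\<tau> - a) / h) powr (-\<alpha>) - 1)"
      by (subst sums_Suc_iff) simp
    moreover have "1 - (\<tau> - a) / h = (t - \<tau>) / (t - a)"
      using \<open>0 < h\<close> by (simp add: h_def field_simps)
    ultimately show ?thesis by (simp add: h_def)
  qed
  have "(\<lambda>\<tau>. (t - \<tau>) powr (-\<alpha>)) integrable_on {a..t}"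
    using has_integral_power_kernel_subst[OF assms(1-3) continuous_on_const[of _ 1]] by auto
  then have "(\<lambda>\<tau>. h powr \<alpha> * (t - \<tau>) powr (-\<alpha>) - 1) integrable_on {a..t}"
    by (intro integrable_diff integrable_on_mult_right integrable_const_ivl)
  then show "(\<lambda>\<tau>. ((t - \<tau>) / (t - a)) powr (-\<alpha>) - 1) integrable_on {a..t}"
    by (rule integrable_eq) (use \<open>0 < h\<close> in \<open>simp add: h_def powr_divide powr_minus field_simps\<close>)
qed

lemma V_fun_by_parts:
  fixes x x' :: "real \<Rightarrow> real" and a b t :: real
  assumes "a \<le> t" "t \<le> b"
    and x: "\<And>\<tau>. \<tau> \<in> {a..b} \<Longrightarrow> (x has_real_derivative x' \<tau>) (at \<tau> within {a..b})"
    and x': "continuous_on {a..b} x'"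
  shows "V_fun a x k t = (t - a) ^ Suc k * x t - integral {a..t} (\<lambda>\<tau>. (\<tau> - a) ^ Suc k * x' \<tau>)"
proof -
  have sub: "{a..t} \<subseteq> {a..b}" using assms by auto
  have "((\<lambda>\<tau>. (\<tau> - a) ^ Suc k * x \<tau>) has_vector_derivative
      real (Suc k) * ((\<tau> - a) ^ k * x \<tau>) + (\<tau> - a) ^ Suc k * x' \<tau>) (at \<tau> within {a..t})"
    if "\<tau> \<in> {a..t}" for \<tau>
  proof -
    have "(x has_real_derivative x' \<tau>) (at \<tau> within {a..t})"
      using DERIV_subset[OF x] that sub by blast
    from DERIV_mult[OF DERIV_power_Suc[OF DERIV_diff[OF DERIV_ident DERIV_const[of a]], of k] this]
    show ?thesis
      unfolding has_real_derivative_iff_has_vector_derivative[symmetric]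
      by (elim DERIV_cong) (simp add: algebra_simps)
  qed
  from fundamental_theorem_of_calculus[OF \<open>a \<le> t\<close> this]
  have "integral {a..t} (\<lambda>\<tau>. real (Suc k) * ((\<tau> - a) ^ k * x \<tau>) + (\<tau> - a) ^ Suc k * x' \<tau>)
      = (t - a) ^ Suc k * x t"
    by (simp add: integral_unique)
  moreover have "(\<lambda>\<tau>. (\<tau> - a) ^ k * x \<tau>) integrable_on {a..t}"
    and "(\<lambda>\<tau>. (\<tau> - a) ^ Suc k * x' \<tau>) integrable_on {a..t}"
    using continuous_on_subset[OF DERIV_continuous_on[OF x] sub] continuous_on_subset[OF x' sub]
    by (auto intro!: integrable_continuous_interval continuous_intros)
  ultimately show ?thesis
    unfolding V_fun_def by (simp add: integral_add integrable_on_mult_right)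
qed

lemma B_series_term_eq:
  fixes x x' :: "real \<Rightarrow> real" and a b t \<alpha> :: real
  assumes "\<alpha> \<notin> \<int>" "a < t" "t \<le> b"
    and x: "\<And>\<tau>. \<tau> \<in> {a..b} \<Longrightarrow> (x has_real_derivative x' \<tau>) (at \<tau> within {a..b})"
    and x': "continuous_on {a..b} x'"
  shows "- B_coef \<alpha> k * (t - a) powr (-\<alpha>) * x t + B_coef \<alpha> k * (t - a) powr (- real (k + 1) - \<alpha>) * V_fun a x k t
     = (t - a) powr (-\<alpha>) / Gamma (1 - \<alpha>)
       * integral {a..t} (\<lambda>\<tau>. pochhammer \<alpha> (Suc k) / fact (Suc k) * ((\<tau> - a) / (t - a)) ^ Suc k * x' \<tau>)"
proof -
  define h where "h = t - a"
  define J where "J = integral {a..t} (\<lambda>\<tau>. (\<tau> - a) ^ Suc k * x' \<tau>)"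
  have "0 < h" using assms by (simp add: h_def)
  have "Gamma (1 - \<alpha>) \<noteq> 0"
    using assms(1) Ints_diff[of 1 "1 - \<alpha>"] nonpos_Ints_subset_Ints by (auto simp: Gamma_eq_zero_iff)
  have integral_eq: "integral {a..t} (\<lambda>\<tau>. pochhammer \<alpha> (Suc k) / fact (Suc k) * ((\<tau> - a) / h) ^ Suc k * x' \<tau>)
      = pochhammer \<alpha> (Suc k) / fact (Suc k) / h ^ Suc k * J"
    unfolding J_def power_divide by (simp add: mult.assoc flip: integral_mult)
  have power_eq: "h powr (- real (k + 1) - \<alpha>) = h powr (-\<alpha>) / h ^ Suc k"
    using \<open>0 < h\<close> by (simp add: powr_diff powr_minus powr_realpow divide_inverse)
  have V_eq: "V_fun a x k t = h ^ Suc k * x t - J"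
    unfolding h_def J_def using assms by (intro V_fun_by_parts[OF _ _ x x']) auto
  have "- (- p / (F * G)) * H * X + (- p / (F * G)) * (H / P) * (P * X - J) = H / G * (p / F / P * J)"
    if "P \<noteq> 0" "F \<noteq> 0" "G \<noteq> 0" for p F G H X J P :: real
    using that by (simp add: field_simps)
  then show ?thesis
    unfolding B_coef_eq_pochhammer[OF assms(1)] h_def[symmetric] integral_eq power_eq V_eq
    using \<open>0 < h\<close> \<open>Gamma (1 - \<alpha>) \<noteq> 0\<close> by simp
qed

lemma B_series_sums:
  fixes x x' :: "real \<Rightarrow> real" and a b t \<alpha> :: real
  assumes "0 < \<alpha>" "\<alpha> < 1" "a < t" "t \<le> b"
    and x: "\<And>\<tau>. \<tau> \<in> {a..b} \<Longrightarrow> (x has_real_derivative x' \<tau>) (at \<tau> within {a..b})"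
    and x': "continuous_on {a..b} x'"
  shows "(\<lambda>k. - B_coef \<alpha> k * (t - a) powr (-\<alpha>) * x t
               + B_coef \<alpha> k * (t - a) powr (- real (k + 1) - \<alpha>) * V_fun a x k t)
         sums (((t - a) powr (-\<alpha>) * (x a - x t) + integral {a..t} (\<lambda>\<tau>. (t - \<tau>) powr (-\<alpha>) * x' \<tau>))
               / Gamma (1 - \<alpha>))"
proof -
  define h where "h = t - a"
  define K where "K = integral {a..t} (\<lambda>\<tau>. (t - \<tau>) powr (-\<alpha>) * x' \<tau>)"
  have "0 < h" using assms by (simp add: h_def)
  have "\<alpha> \<notin> \<int>" using assms Ints_nonzero_abs_less1[of \<alpha>] by auto
  have sub: "{a..t} \<subseteq> {a..b}" using assms by auto
  have "((\<lambda>\<tau>. (t - \<tau>) powr (-\<alpha>) * x' \<tau>) has_integral K) {a..t}"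
    using has_integral_power_kernel_subst[OF assms(1-3) continuous_on_subset[OF x' sub]]
    unfolding K_def by blast
  moreover have "(x' has_integral (x t - x a)) {a..t}"
    using assms DERIV_subset[OF x] sub
    by (intro fundamental_theorem_of_calculus) (auto simp: has_real_derivative_iff_has_vector_derivative[symmetric])
  ultimately have diff: "((\<lambda>\<tau>. h powr \<alpha> * ((t - \<tau>) powr (-\<alpha>) * x' \<tau>) - x' \<tau>) has_integral
      h powr \<alpha> * K - (x t - x a)) {a..t}"
    by (intro has_integral_diff has_integral_mult_right)
  have integral_eq: "integral {a..t} (\<lambda>\<tau>. (((t - \<tau>) / (t - a)) powr (-\<alpha>) - 1) * x' \<tau>)
      = h powr \<alpha> * K - (x t - x a)"
    by (intro integral_unique has_integral_eq[OF _ diff])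
      (use \<open>0 < h\<close> in \<open>auto simp: h_def powr_divide powr_minus field_simps\<close>)
  from sums_mult[OF binomial_kernel_series_sums[OF assms(1-3) continuous_on_subset[OF x' sub]],
      of "(t - a) powr (-\<alpha>) / Gamma (1 - \<alpha>)"]
  have "(\<lambda>k. - B_coef \<alpha> k * (t - a) powr (-\<alpha>) * x t
               + B_coef \<alpha> k * (t - a) powr (- real (k + 1) - \<alpha>) * V_fun a x k t)
      sums ((t - a) powr (-\<alpha>) / Gamma (1 - \<alpha>) * (h powr \<alpha> * K - (x t - x a)))"
    by (simp only: B_series_term_eq[OF \<open>\<alpha> \<notin> \<int>\<close> assms(3,4) x x'] integral_eq)
  moreover have "h powr (-\<alpha>) * h powr \<alpha> = 1"
    using \<open>0 < h\<close> by (simp add: powr_minus)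
  ultimately show ?thesis
    unfolding K_def[symmetric] h_def[symmetric] by (simp add: field_simps)
qed

lemma Cn_on_first_derivative:
  assumes "Cn_on n a b x D" "1 \<le> n"
  shows "\<And>\<tau>. \<tau> \<in> {a..b} \<Longrightarrow> (x has_real_derivative D 1 \<tau>) (at \<tau> within {a..b})"
    and "continuous_on {a..b} (D 1)"
proof -
  have D0: "\<And>\<tau>. \<tau> \<in> {a..b} \<Longrightarrow> D 0 \<tau> = x \<tau>"
    and D: "\<And>i \<tau>. i < n \<Longrightarrow> \<tau> \<in> {a..b} \<Longrightarrow> (D i has_real_derivative D (Suc i) \<tau>) (at \<tau> within {a..b})"
    and Dn: "continuous_on {a..b} (D n)"
    using assms(1) unfolding Cn_on_def by auto
  show "(x has_real_derivative D 1 \<tau>) (at \<tau> within {a..b})" if "\<tau> \<in> {a..b}" for \<tau>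
    using has_field_derivative_transform_within[OF D[of 0 \<tau>] zero_less_one that] assms(2) that D0 by simp
  show "continuous_on {a..b} (D 1)"
  proof (cases "n = 1")
    case False
    then show ?thesis
      using assms(2) D[of 1] by (intro DERIV_continuous_on[of _ _ "D 2"]) (auto simp: numeral_2_eq_2)
  qed (use Dn in simp)
qed

theorem theorem5p3:
  fixes a b \<alpha> t :: real and n :: nat and x :: "real \<Rightarrow> real" and D :: "nat \<Rightarrow> real \<Rightarrow> real"
  assumes "a < b" and "0 < \<alpha>" and "\<alpha> < 1" and "1 \<le> n"
    and "Cn_on n a b x D"
    and "t \<in> {a<..b}"
  shows "(\<forall>i\<in>{1..n-1}. summable (\<lambda>k. Gamma (real k + 1 - real i + \<alpha>) / (Gamma (\<alpha> - real i) * fact (k + 1))))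
    \<and> summable (\<lambda>k. - B_coef \<alpha> k * (t - a) powr (-\<alpha>) * x t
                     + B_coef \<alpha> k * (t - a) powr (- real (k + 1) - \<alpha>) * V_fun a x k t)
    \<and> RL_deriv_at a b \<alpha> x t
        (1 / Gamma (1 - \<alpha>) * (t - a) powr (-\<alpha>) * x t
         + (\<Sum>i = 1..n-1. A_coef n \<alpha> i * (t - a) powr (real i - \<alpha>) * D i t)
         + (\<Sum>k. - B_coef \<alpha> k * (t - a) powr (-\<alpha>) * x t
                 + B_coef \<alpha> k * (t - a) powr (- real (k + 1) - \<alpha>) * V_fun a x k t))"
proof -
  have t: "a < t" "t \<le> b" using assms(6) by auto
  note x = Cn_on_first_derivative(1)[OF assms(5,4)] and x' = Cn_on_first_derivative(2)[OF assms(5,4)]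
  have "\<alpha> \<notin> \<int>" using assms(2,3) Ints_nonzero_abs_less1[of \<alpha>] by auto
  then have A_sums: "(\<lambda>k. Gamma (real k + 1 - real i + \<alpha>) / (Gamma (\<alpha> - real i) * fact (k + 1))) sums (-1)"
    and A_zero: "A_coef n \<alpha> i = 0" if "i \<in> {1..n-1}" for i
    using A_coef_series_sums A_coef_eq_0 that assms(3) by auto
  note B_sums = B_series_sums[OF assms(2,3) t x x']
  have "Gamma (1 - \<alpha>) \<noteq> 0"
    using assms(2,3) by (simp add: Gamma_real_pos less_imp_neq[symmetric])
  then have RL_value: "1 / Gamma (1 - \<alpha>) * ((t - a) powr (-\<alpha>) * x a + integral {a..t} (\<lambda>\<tau>. (t - \<tau>) powr (-\<alpha>) * D 1 \<tau>))
      = 1 / Gamma (1 - \<alpha>) * (t - a) powr (-\<alpha>) * x t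
         + (\<Sum>i = 1..n-1. A_coef n \<alpha> i * (t - a) powr (real i - \<alpha>) * D i t)
         + (\<Sum>k. - B_coef \<alpha> k * (t - a) powr (-\<alpha>) * x t
                 + B_coef \<alpha> k * (t - a) powr (- real (k + 1) - \<alpha>) * V_fun a x k t)"
    using sums_unique[OF B_sums, symmetric] by (simp add: A_zero field_simps)
  have RL: "RL_deriv_at a b \<alpha> x t (1 / Gamma (1 - \<alpha>) * ((t - a) powr (-\<alpha>) * x a
      + integral {a..t} (\<lambda>\<tau>. (t - \<tau>) powr (-\<alpha>) * D 1 \<tau>)))"
    unfolding RL_deriv_at_def by (rule DERIV_cmult[OF abel_integral_has_derivative[OF assms(2,3) t x x']])
  show ?thesis
    using RL sums_summable[OF A_sums] sums_summable[OF B_sums] unfolding RL_value by blast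
qed

end
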